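(* For every positive integer $n$, \[ q(n) = L+\sum_{k=1}^\infty (-1)^{k+1} \Big( q\Big( \frac{2n-P_{5,k}}{2}\Big) +q\Big( \frac{2n-Q_{5,k}}{2}\Big) \Big), \] where $P_{5,k}=\frac{k(3k-1)}{2}$, $Q_{5,k}=\frac{k(3k+1)}{2}$, and \[ L = \begin{cases} -1, &\text{if } 2n=\Delta_{4k+1}\text{ or } 2n=\Delta_{4k+2}\text{ for some }k\in\mathbb{N}_0, \\ 1, &\text{if } 2n=\Delta_{4k+3}\text{ or }2n=\Delta_{4k+4}\text{ for some }k\in\mathbb{N}_0, \\ 0, & \text{otherwise.} \end{cases} \]
   Context: $q(n)$ is the number of partitions of $n$ into distinct parts, with $q(0)=1$, and $q(x)=0$ for every rational $x\notin\mathbb{N}_0$ (in particular for non-integers and negative numbers). $\Delta_m=\frac{m(m+1)}{2}$ is the $m$-th triangular number. *)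

theory Defs
  imports Complex_Main
begin

text \<open>Number of partitions of n into distinct parts: finite sets of positive
  integers summing to n (each such set is a subset of {1..n}).\<close>
definition qd :: "nat \<Rightarrow> nat" where
  "qd n = card {A :: nat set. A \<subseteq> {1..n} \<and> \<Sum>A = n}"

definition q :: "rat \<Rightarrow> nat" where
  "q x = (if x \<in> \<int> \<and> x \<ge> 0 then qd (nat \<lfloor>x\<rfloor>) else 0)"

definition tri :: "nat \<Rightarrow> nat" where
  "tri m = m * (m + 1) div 2"

definition P5 :: "nat \<Rightarrow> rat" where
  "P5 k = of_nat k * (3 * of_nat k - 1) / 2"

definition Q5 :: "nat \<Rightarrow> rat" where
  "Q5 k = of_nat k * (3 * of_nat k + 1) / 2"

definition Lterm :: "nat \<Rightarrow> int" where
  "Lterm n = (if \<exists>k. 2 * n = tri (4*k+1) \<or> 2 * n = tri (4*k+2) then -1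
              else if \<exists>k. 2 * n = tri (4*k+3) \<or> 2 * n = tri (4*k+4) then 1
              else 0)"

end

theory Submission
  imports Defs "HOL-Computational_Algebra.Formal_Power_Series"
begin

(*
  With D(x) = prod_k (1 + x^(2k)) = sum_n q(n) x^(2n), the factorisation
  (1 + x^(2k)) (1 - x^(2k)) = 1 - x^(4k) gives
    D(x) prod_k (1 - x^k) = prod_k (1 - x^(4k)) (1 - x^(4k-1)) (1 - x^(4k-3)).
  The Jacobi triple product expands the left factor prod_k (1 - x^k) into
  Euler's pentagonal series sum_j (-1)^j x^(j(3j+1)/2) and the right-hand side
  into sum_j (-1)^j x^(2j^2+j) = sum_m (-1)^ceil(m/2) x^(Delta_m).  Comparing the
  coefficients of x^(2n) gives the identity, the pentagonal numbers j(3j+1)/2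
  being Q_(5,j) for j > 0 and P_(5,-j) for j < 0.
  Everything is done with finite products: the triple product is proved in
  Cauchy's finite form with Gaussian binomial coefficients, which agrees with
  the infinite product modulo x^(n+1).
*)

section \<open>Gaussian binomial coefficients\<close>

(* gauss_binom r a b is the Gaussian binomial coefficient [a + b, a] in r. *)
fun gauss_binom :: "'a::comm_ring_1 \<Rightarrow> nat \<Rightarrow> nat \<Rightarrow> 'a" where
  "gauss_binom r 0 b = 1"
| "gauss_binom r (Suc a) 0 = 1"
| "gauss_binom r (Suc a) (Suc b) = gauss_binom r a (Suc b) + r ^ Suc a * gauss_binom r (Suc a) b"

declare gauss_binom.simps(3) [simp del]

lemma gauss_binom_0_right [simp]: "gauss_binom r a 0 = 1"
  by (cases a) auto

lemma gauss_binom_1_right: "gauss_binom r a 1 = (\<Sum>i\<le>a. r ^ i)"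
  by (induction a) (auto simp: gauss_binom.simps(3)[of r _ 0, simplified])

lemma gauss_binom_1_left: "gauss_binom r 1 b = (\<Sum>i\<le>b. r ^ i)"
proof (induction b)
  case (Suc b)
  have "gauss_binom r 1 (Suc b) = 1 + r * gauss_binom r 1 b"
    by (simp add: numeral_eq_Suc gauss_binom.simps(3))
  also have "\<dots> = (\<Sum>i\<le>Suc b. r ^ i)"
    using Suc by (simp add: sum_distrib_left sum.atMost_Suc_shift del: sum.atMost_Suc)
  finally show ?case .
qed simp

lemma gauss_binom_shift:
  "(1 - r ^ Suc a) * gauss_binom r (Suc a) b = (1 - r ^ Suc b) * gauss_binom r a (Suc b)"
proof (induction r a b rule: gauss_binom.induct)
  case (1 r b)
  then show ?case
    using gauss_binom_1_left[of r b] sum_gp_basic[of r b] by (simp add: mult.commute)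
next
  case (2 r a)
  then show ?case
    using gauss_binom_1_right[of r "Suc a"] sum_gp_basic[of r "Suc a"] by (simp add: mult.commute)
next
  case (3 r a b)
  let ?c = "1 - r ^ Suc (Suc (Suc (a + b)))"
  have "(1 - r ^ Suc (Suc a)) * gauss_binom r (Suc (Suc a)) (Suc b)
      = (1 - r ^ Suc (Suc a)) * gauss_binom r (Suc a) (Suc b)
        + r ^ Suc (Suc a) * ((1 - r ^ Suc (Suc a)) * gauss_binom r (Suc (Suc a)) b)"
    by (simp only: gauss_binom.simps(3)[of r "Suc a" b]) (simp add: algebra_simps)
  also have "\<dots> = (1 - r ^ Suc (Suc a)) * gauss_binom r (Suc a) (Suc b)
        + r ^ Suc (Suc a) * ((1 - r ^ Suc b) * gauss_binom r (Suc a) (Suc b))"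
    using 3(2) by simp
  also have "\<dots> = ?c * gauss_binom r (Suc a) (Suc b)"
    by (simp add: algebra_simps power_add)
  finally have left: "(1 - r ^ Suc (Suc a)) * gauss_binom r (Suc (Suc a)) (Suc b)
      = ?c * gauss_binom r (Suc a) (Suc b)" .
  have "(1 - r ^ Suc (Suc b)) * gauss_binom r (Suc a) (Suc (Suc b))
      = (1 - r ^ Suc (Suc b)) * gauss_binom r a (Suc (Suc b))
        + r ^ Suc a * ((1 - r ^ Suc (Suc b)) * gauss_binom r (Suc a) (Suc b))"
    by (simp only: gauss_binom.simps(3)[of r a "Suc b"]) (simp add: algebra_simps)
  also have "\<dots> = (1 - r ^ Suc a) * gauss_binom r (Suc a) (Suc b)
        + r ^ Suc a * ((1 - r ^ Suc (Suc b)) * gauss_binom r (Suc a) (Suc b))"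
    using 3(1) by simp
  also have "\<dots> = ?c * gauss_binom r (Suc a) (Suc b)"
    by (simp add: algebra_simps power_add)
  finally show ?case using left by simp
qed

lemma gauss_binom_Suc_Suc':
  "gauss_binom r (Suc a) (Suc b) = r ^ Suc b * gauss_binom r a (Suc b) + gauss_binom r (Suc a) b"
  using gauss_binom.simps(3)[of r a b] gauss_binom_shift[of r a b] by (simp add: algebra_simps)

lemma gauss_binom_sym: "gauss_binom r a b = gauss_binom r b a"
proof (induction r a b rule: gauss_binom.induct)
  case (3 r a b)
  then show ?case
    using gauss_binom_Suc_Suc'[of r b a] by (simp add: add.commute gauss_binom.simps(3))
qed simp_all

definition qpoch :: "'a::comm_ring_1 \<Rightarrow> nat \<Rightarrow> 'a" where
  "qpoch r n = (\<Prod>k<n. 1 - r ^ Suc k)"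

lemma gauss_binom_mult_qpoch:
  "gauss_binom r a b * qpoch r b = (\<Prod>i<b. 1 - r ^ (Suc a + i))"
proof (induction b arbitrary: a)
  case 0
  then show ?case by (simp add: qpoch_def)
next
  case (Suc b)
  have "gauss_binom r a (Suc b) * qpoch r (Suc b)
      = ((1 - r ^ Suc b) * gauss_binom r a (Suc b)) * qpoch r b"
    by (simp add: qpoch_def algebra_simps)
  also have "\<dots> = (1 - r ^ Suc a) * (gauss_binom r (Suc a) b * qpoch r b)"
    by (simp only: gauss_binom_shift[symmetric] mult.assoc)
  also have "\<dots> = (\<Prod>i<Suc b. 1 - r ^ (Suc a + i))"
    by (simp add: Suc prod.lessThan_Suc_shift del: prod.lessThan_Suc)
  finally show ?case .
qed

lemma gauss_binom_Suc_Suc_three_term: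
  "gauss_binom r (Suc a) (Suc b) = gauss_binom r a b * (1 + r ^ (a + b + 1))
     + r ^ (b + 1) * (if a = 0 then 0 else gauss_binom r (a - 1) (b + 1))
     + r ^ (a + 1) * (if b = 0 then 0 else gauss_binom r (a + 1) (b - 1))"
proof -
  have "gauss_binom r a (Suc b)
      = r ^ (b + 1) * (if a = 0 then 0 else gauss_binom r (a - 1) (b + 1)) + gauss_binom r a b"
    by (cases a) (simp_all add: gauss_binom_Suc_Suc')
  moreover have "gauss_binom r (Suc a) b
      = r ^ b * gauss_binom r a b + (if b = 0 then 0 else gauss_binom r (a + 1) (b - 1))"
    by (cases b) (simp_all add: gauss_binom_Suc_Suc')
  ultimately show ?thesis
    by (simp add: gauss_binom.simps(3) algebra_simps power_add)
qed

definition gauss_binom_int :: "'a::comm_ring_1 \<Rightarrow> int \<Rightarrow> int \<Rightarrow> 'a" where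
  "gauss_binom_int r a b = (if a < 0 \<or> b < 0 then 0 else gauss_binom r (nat a) (nat b))"

lemma gauss_binom_int_plus_one:
  assumes "a \<ge> -1" "b \<ge> -1" "a + b \<ge> 0"
  shows "gauss_binom_int r (a + 1) (b + 1) = gauss_binom_int r a b * (1 + r ^ nat (a + b + 1))
     + r ^ nat (b + 1) * gauss_binom_int r (a - 1) (b + 1)
     + r ^ nat (a + 1) * gauss_binom_int r (a + 1) (b - 1)"
proof (cases "a = -1 \<or> b = -1")
  case True
  then show ?thesis using assms by (auto simp: gauss_binom_int_def)
next
  case False
  with assms have "a \<ge> 0" "b \<ge> 0" by auto
  then obtain a' b' where ab: "a = int a'" "b = int b'"
    by (metis nonneg_int_cases)
  have "nat (a + 1) = Suc a'" "nat (b + 1) = Suc b'" "nat (a + b + 1) = a' + b' + 1"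
    using ab by auto
  then show ?thesis
    using gauss_binom_Suc_Suc_three_term[of r a' b']
    by (auto simp: gauss_binom_int_def ab nat_diff_distrib')
qed

section \<open>Cauchy's finite Jacobi triple product\<close>

definition tri_int :: "int \<Rightarrow> nat" where
  "tri_int j = nat (j * (j + 1) div 2)"

lemma double_tri_int: "2 * int (tri_int j) = j * (j + 1)"
proof -
  have "j * (j + 1) \<ge> 0"
    by (cases "j \<ge> 0") (auto simp: mult_nonpos_nonpos)
  moreover have "even (j * (j + 1))"
    by simp
  ultimately show ?thesis
    unfolding tri_int_def by simp
qed

lemma tri_int_plus_one: "int (tri_int (j + 1)) = int (tri_int j) + j + 1"
proof -
  have "2 * int (tri_int (j + 1)) = 2 * (int (tri_int j) + j + 1)"
    unfolding distrib_left double_tri_int by algebra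
  then show ?thesis
    by simp
qed

lemma tri_int_add_tri_int_uminus: "int (tri_int j) + int (tri_int (- j)) = j * j"
proof -
  have "2 * (int (tri_int j) + int (tri_int (- j))) = 2 * (j * j)"
    unfolding distrib_left double_tri_int by algebra
  then show ?thesis
    by simp
qed

lemma tri_int_of_nat [simp]: "tri_int (int m) = tri m"
proof -
  have "2 * tri m = m * (m + 1)"
    unfolding tri_def by simp
  then have "2 * int (tri m) = int m * (int m + 1)"
    by (metis of_nat_1 of_nat_add of_nat_mult of_nat_numeral)
  then show ?thesis
    using double_tri_int[of "int m"] by linarith
qed

lemma tri_Suc: "tri (Suc m) = tri m + Suc m"
proof -
  have "Suc m * (Suc m + 1) = m * (m + 1) + 2 * Suc m"
    by simp
  then show ?thesis
    unfolding tri_def by simp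
qed

lemma strict_mono_tri: "strict_mono tri"
  by (simp add: strict_mono_Suc_iff tri_Suc)

lemma le_tri: "m \<le> tri m"
  by (induction m) (simp_all add: tri_Suc tri_def)

definition jtp_term :: "'a::comm_ring_1 \<Rightarrow> 'a \<Rightarrow> int \<Rightarrow> 'a" where
  "jtp_term u v j = u ^ tri_int j * v ^ tri_int (- j)"

definition jtp_prod :: "'a::comm_ring_1 \<Rightarrow> 'a \<Rightarrow> nat \<Rightarrow> 'a" where
  "jtp_prod u v n = (\<Prod>k<n. (1 + u ^ Suc k * v ^ k) * (1 + u ^ k * v ^ Suc k))"

lemma jtp_term_mult_up:
  assumes "j \<le> int n"
  shows "jtp_term u v j * (u ^ Suc n * v ^ n) = (u * v) ^ nat (int n - j) * jtp_term u v (j + 1)"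
proof -
  have u: "tri_int j + Suc n = tri_int (j + 1) + nat (int n - j)"
    using tri_int_plus_one[of j] assms by linarith
  have v: "tri_int (- j) + n = tri_int (- (j + 1)) + nat (int n - j)"
    using tri_int_plus_one[of "- (j + 1)"] assms by simp
  have "jtp_term u v j * (u ^ Suc n * v ^ n) = u ^ (tri_int j + Suc n) * v ^ (tri_int (- j) + n)"
    unfolding jtp_term_def power_add by (simp only: ac_simps)
  also have "\<dots> = (u * v) ^ nat (int n - j) * jtp_term u v (j + 1)"
    unfolding u v jtp_term_def power_add power_mult_distrib by (simp only: ac_simps)
  finally show ?thesis .
qed

lemma jtp_term_mult_down:
  assumes "- int n \<le> j"
  shows "jtp_term u v j * (u ^ n * v ^ Suc n) = (u * v) ^ nat (int n + j) * jtp_term u v (j - 1)"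
proof -
  have u: "tri_int j + n = tri_int (j - 1) + nat (int n + j)"
    using tri_int_plus_one[of "j - 1"] assms by simp
  have v: "tri_int (- j) + Suc n = tri_int (- (j - 1)) + nat (int n + j)"
    using tri_int_plus_one[of "- j"] assms by simp
  have "jtp_term u v j * (u ^ n * v ^ Suc n) = u ^ (tri_int j + n) * v ^ (tri_int (- j) + Suc n)"
    unfolding jtp_term_def power_add by (simp only: ac_simps)
  also have "\<dots> = (u * v) ^ nat (int n + j) * jtp_term u v (j - 1)"
    unfolding u v jtp_term_def power_add power_mult_distrib by (simp only: ac_simps)
  finally show ?thesis .
qed

lemma jtp_sum_mult_up:
  assumes "\<And>j. j \<notin> {-int n..int n} \<Longrightarrow> c j = 0"
  shows "(\<Sum>j\<in>{-int n..int n}. c j * jtp_term u v j) * (u ^ Suc n * v ^ n)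
    = (\<Sum>j\<in>{-int n - 1..int n + 1}. c (j - 1) * (u * v) ^ nat (int n + 1 - j) * jtp_term u v j)"
proof -
  have "(\<Sum>j\<in>{-int n..int n}. c j * jtp_term u v j) * (u ^ Suc n * v ^ n)
      = (\<Sum>j\<in>{-int n..int n}. c j * (u * v) ^ nat (int n - j) * jtp_term u v (j + 1))"
    unfolding sum_distrib_right
    by (intro sum.cong refl) (simp_all only: mult.assoc jtp_term_mult_up atLeastAtMost_iff)
  also have "\<dots> = (\<Sum>j\<in>{-int n + 1..int n + 1}.
      c (j - 1) * (u * v) ^ nat (int n + 1 - j) * jtp_term u v j)"
    by (rule sum.reindex_bij_witness[of _ "\<lambda>j. j - 1" "\<lambda>j. j + 1"]) auto
  also have "\<dots> = (\<Sum>j\<in>{-int n - 1..int n + 1}.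
      c (j - 1) * (u * v) ^ nat (int n + 1 - j) * jtp_term u v j)"
    using assms by (intro sum.mono_neutral_left) auto
  finally show ?thesis .
qed

lemma jtp_sum_mult_down:
  assumes "\<And>j. j \<notin> {-int n..int n} \<Longrightarrow> c j = 0"
  shows "(\<Sum>j\<in>{-int n..int n}. c j * jtp_term u v j) * (u ^ n * v ^ Suc n)
    = (\<Sum>j\<in>{-int n - 1..int n + 1}. c (j + 1) * (u * v) ^ nat (int n + 1 + j) * jtp_term u v j)"
proof -
  have "(\<Sum>j\<in>{-int n..int n}. c j * jtp_term u v j) * (u ^ n * v ^ Suc n)
      = (\<Sum>j\<in>{-int n..int n}. c j * (u * v) ^ nat (int n + j) * jtp_term u v (j - 1))"
    unfolding sum_distrib_right
    by (intro sum.cong refl) (simp_all only: mult.assoc jtp_term_mult_down atLeastAtMost_iff)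
  also have "\<dots> = (\<Sum>j\<in>{-int n - 1..int n - 1}.
      c (j + 1) * (u * v) ^ nat (int n + 1 + j) * jtp_term u v j)"
    by (rule sum.reindex_bij_witness[of _ "\<lambda>j. j + 1" "\<lambda>j. j - 1"]) auto
  also have "\<dots> = (\<Sum>j\<in>{-int n - 1..int n + 1}.
      c (j + 1) * (u * v) ^ nat (int n + 1 + j) * jtp_term u v j)"
    using assms by (intro sum.mono_neutral_left) auto
  finally show ?thesis .
qed

lemma jtp_sum_mult_factors:
  assumes "\<And>j. j \<notin> {-int n..int n} \<Longrightarrow> c j = 0"
  shows "(\<Sum>j\<in>{-int n..int n}. c j * jtp_term u v j) * ((1 + u ^ Suc n * v ^ n) * (1 + u ^ n * v ^ Suc n))
    = (\<Sum>j\<in>{-int n - 1..int n + 1}. (c j * (1 + (u * v) ^ (2 * n + 1))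
        + c (j - 1) * (u * v) ^ nat (int n + 1 - j) + c (j + 1) * (u * v) ^ nat (int n + 1 + j))
        * jtp_term u v j)"
proof -
  define S where "S = (\<Sum>j\<in>{-int n..int n}. c j * jtp_term u v j)"
  let ?I = "{-int n - 1..int n + 1}"
  have "2 * n + 1 = Suc n + n"
    by simp
  then have "(u ^ Suc n * v ^ n) * (u ^ n * v ^ Suc n) = (u * v) ^ (2 * n + 1)"
    by (simp only: power_add power_mult_distrib ac_simps)
  then have "S * ((1 + u ^ Suc n * v ^ n) * (1 + u ^ n * v ^ Suc n))
      = S * (1 + (u * v) ^ (2 * n + 1)) + S * (u ^ Suc n * v ^ n) + S * (u ^ n * v ^ Suc n)"
    by (simp add: algebra_simps)
  also have "S * (1 + (u * v) ^ (2 * n + 1))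
      = (\<Sum>j\<in>?I. c j * (1 + (u * v) ^ (2 * n + 1)) * jtp_term u v j)"
  proof -
    have S_ext: "S = (\<Sum>j\<in>?I. c j * jtp_term u v j)"
      unfolding S_def using assms by (intro sum.mono_neutral_left) auto
    show ?thesis
      unfolding S_ext sum_distrib_right by (simp only: ac_simps)
  qed
  also have "S * (u ^ Suc n * v ^ n)
      = (\<Sum>j\<in>?I. c (j - 1) * (u * v) ^ nat (int n + 1 - j) * jtp_term u v j)"
    unfolding S_def using assms by (rule jtp_sum_mult_up)
  also have "S * (u ^ n * v ^ Suc n)
      = (\<Sum>j\<in>?I. c (j + 1) * (u * v) ^ nat (int n + 1 + j) * jtp_term u v j)"
    unfolding S_def using assms by (rule jtp_sum_mult_down)
  finally show ?thesis
    unfolding S_def by (simp only: distrib_right sum.distrib)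
qed

theorem jacobi_triple_product_finite:
  "jtp_prod u v n
    = (\<Sum>j\<in>{-int n..int n}. gauss_binom_int (u * v) (int n + j) (int n - j) * jtp_term u v j)"
proof (induction n)
  case 0
  show ?case
    by (simp add: jtp_prod_def gauss_binom_int_def jtp_term_def tri_int_def)
next
  case (Suc n)
  let ?c = "\<lambda>j. gauss_binom_int (u * v) (int n + j) (int n - j)"
  let ?I = "{-int n - 1..int n + 1}"
  have "jtp_prod u v (Suc n)
      = (\<Sum>j\<in>{-int n..int n}. ?c j * jtp_term u v j) * ((1 + u ^ Suc n * v ^ n) * (1 + u ^ n * v ^ Suc n))"
    unfolding Suc.IH[symmetric] by (simp only: jtp_prod_def prod.lessThan_Suc)
  also have "\<dots> = (\<Sum>j\<in>?I. (?c j * (1 + (u * v) ^ (2 * n + 1))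
        + ?c (j - 1) * (u * v) ^ nat (int n + 1 - j) + ?c (j + 1) * (u * v) ^ nat (int n + 1 + j))
        * jtp_term u v j)"
    by (rule jtp_sum_mult_factors) (auto simp: gauss_binom_int_def)
  also have "\<dots>
      = (\<Sum>j\<in>?I. gauss_binom_int (u * v) (int (Suc n) + j) (int (Suc n) - j) * jtp_term u v j)"
  proof (intro sum.cong refl)
    fix j assume "j \<in> ?I"
    then show "(?c j * (1 + (u * v) ^ (2 * n + 1))
        + ?c (j - 1) * (u * v) ^ nat (int n + 1 - j) + ?c (j + 1) * (u * v) ^ nat (int n + 1 + j))
        * jtp_term u v j = gauss_binom_int (u * v) (int (Suc n) + j) (int (Suc n) - j) * jtp_term u v j"
      using gauss_binom_int_plus_one[of "int n + j" "int n - j" "u * v"]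
      by (simp add: nat_add_distrib nat_mult_distrib algebra_simps)
  qed
  also have "?I = {-int (Suc n)..int (Suc n)}"
    by auto
  finally show ?case .
qed

lemma dvd_prod_one_minus_sub_one:
  fixes d :: "'a::comm_ring_1"
  assumes "finite S" "\<And>k. k \<in> S \<Longrightarrow> d dvd g k"
  shows "d dvd (\<Prod>k\<in>S. 1 - g k) - 1"
  using assms
proof (induction S rule: finite_induct)
  case (insert k S)
  have "(\<Prod>k\<in>insert k S. 1 - g k) - 1
      = ((\<Prod>k\<in>S. 1 - g k) - 1) - g k * (\<Prod>k\<in>S. 1 - g k)"
    using insert.hyps by (simp add: algebra_simps)
  then show ?case
    using insert by (metis dvd_diff dvd_mult2 insertI1 insertI2)
qed simp

lemma qpoch_mult_gauss_binom_congruent: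
  fixes d r :: "'a::comm_ring_1"
  assumes "d dvd r" "b \<le> n" "b \<le> a"
  shows "d ^ Suc b dvd qpoch r n * gauss_binom r a b - 1"
proof -
  define P where "P = (\<Prod>k\<in>{b..<n}. 1 - r ^ Suc k)"
  have "qpoch r n = qpoch r b * P"
    unfolding qpoch_def P_def lessThan_atLeast0
    by (rule prod.atLeastLessThan_concat[symmetric]) (use assms(2) in simp_all)
  then have split: "qpoch r n * gauss_binom r a b - 1
      = gauss_binom r a b * qpoch r b * (P - 1) + (gauss_binom r a b * qpoch r b - 1)"
    by (simp add: algebra_simps)
  have "d ^ Suc b dvd P - 1"
    unfolding P_def using assms(1) by (intro dvd_prod_one_minus_sub_one dvd_power_le) auto
  moreover have "d ^ Suc b dvd gauss_binom r a b * qpoch r b - 1"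
    unfolding gauss_binom_mult_qpoch using assms(1,3)
    by (intro dvd_prod_one_minus_sub_one dvd_power_le) auto
  ultimately show ?thesis
    unfolding split by simp
qed

lemma abs_le_tri_int_add_tri_int_uminus: "nat \<bar>j\<bar> \<le> tri_int j + tri_int (- j)"
proof -
  have "\<bar>j\<bar> * 1 \<le> \<bar>j\<bar> * \<bar>j\<bar>" if "j \<noteq> 0"
    using that by (intro mult_left_mono) auto
  then have "\<bar>j\<bar> \<le> j * j"
    by (cases "j = 0") auto
  then show ?thesis
    using tri_int_add_tri_int_uminus[of j] by linarith
qed

lemma jtp_term_dvd:
  fixes d u v :: "'a::comm_ring_1"
  assumes "d dvd u" "d dvd v"
  shows "d ^ (tri_int j + tri_int (- j)) dvd jtp_term u v j"
  unfolding jtp_term_def power_add using assms by (intro mult_dvd_mono dvd_power_same)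

(* The j-th coefficient times (uv; uv)_n is 1 modulo d^(n - |j| + 1), and the
   j-th term itself is divisible by d^(j^2). *)
theorem jacobi_triple_product_congruent:
  fixes d u v :: "'a::comm_ring_1"
  assumes u: "d dvd u" and v: "d dvd v"
  shows "d ^ Suc n dvd qpoch (u * v) n * jtp_prod u v n - (\<Sum>j\<in>{-int n..int n}. jtp_term u v j)"
proof -
  define r where "r = u * v"
  have r: "d dvd r"
    unfolding r_def using u by (rule dvd_mult2)
  have "qpoch r n * jtp_prod u v n - (\<Sum>j\<in>{-int n..int n}. jtp_term u v j)
      = (\<Sum>j\<in>{-int n..int n}.
          (qpoch r n * gauss_binom_int r (int n + j) (int n - j) - 1) * jtp_term u v j)"
    unfolding jacobi_triple_product_finite r_def[symmetric] sum_distrib_left sum_subtractf[symmetric]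
    by (rule sum.cong) (simp_all add: algebra_simps)
  also have "d ^ Suc n dvd \<dots>"
  proof (rule dvd_sum)
    fix j assume j: "j \<in> {-int n..int n}"
    define m where "m = nat (int n - \<bar>j\<bar>)"
    have binom: "d ^ Suc m dvd qpoch r n * gauss_binom_int r (int n + j) (int n - j) - 1"
    proof (cases "j \<ge> 0")
      case True
      then show ?thesis
        using j qpoch_mult_gauss_binom_congruent[OF r, of "nat (int n - j)" n "nat (int n + j)"]
        by (simp add: m_def gauss_binom_int_def)
    next
      case False
      then show ?thesis
        using j qpoch_mult_gauss_binom_congruent[OF r, of "nat (int n + j)" n "nat (int n - j)"]
        by (simp add: m_def gauss_binom_int_def gauss_binom_sym[of r "nat (int n + j)"])
    qed
    have "d ^ (Suc m + (tri_int j + tri_int (- j)))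
        dvd (qpoch r n * gauss_binom_int r (int n + j) (int n - j) - 1) * jtp_term u v j"
      using mult_dvd_mono[OF binom jtp_term_dvd[OF u v, of j]] by (simp only: power_add)
    moreover have "Suc n \<le> Suc m + (tri_int j + tri_int (- j))"
      using j abs_le_tri_int_add_tri_int_uminus[of j] unfolding m_def by linarith
    ultimately show "d ^ Suc n dvd (qpoch r n * gauss_binom_int r (int n + j) (int n - j) - 1) * jtp_term u v j"
      using power_le_dvd by blast
  qed
  finally show ?thesis
    unfolding r_def .
qed

section \<open>Euler's product and the theta product as power series\<close>

lemma qpoch_mult_jtp_prod_neg:
  fixes x y :: "'a::comm_ring_1"
  shows "qpoch (- x * - y) n * jtp_prod (- x) (- y) n
    = (\<Prod>k<n. (1 - (x * y) ^ Suc k) * (1 - x ^ Suc k * y ^ k) * (1 - x ^ k * y ^ Suc k))"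
proof -
  have "(- x) ^ k * (- y) ^ k = x ^ k * y ^ k" for k
    by (simp flip: power_mult_distrib)
  then have "(- x) ^ Suc k * (- y) ^ k = - (x ^ Suc k * y ^ k)"
    and "(- x) ^ k * (- y) ^ Suc k = - (x ^ k * y ^ Suc k)" for k
    by (simp_all add: algebra_simps)
  then show ?thesis
    unfolding qpoch_def jtp_prod_def prod.distrib[symmetric] minus_mult_minus
    by (intro prod.cong refl) (simp add: algebra_simps)
qed

lemma qpoch_mult_jtp_prod_neg_X_powers:
  "qpoch (- (fps_X ^ a) * - (fps_X ^ b)) n * jtp_prod (- (fps_X ^ a)) (- (fps_X ^ b)) n
    = (\<Prod>k<n. (1 - fps_X ^ ((a + b) * Suc k)) * (1 - fps_X ^ (a * Suc k + b * k))
              * (1 - fps_X ^ (a * k + b * Suc k)) :: 'a::comm_ring_1 fps)"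
  unfolding qpoch_mult_jtp_prod_neg by (simp only: power_add power_mult power_mult_distrib)

lemma neg_one_power_tri_int_add_tri_int_uminus:
  "(-1 :: 'a::comm_ring_1) ^ (tri_int j + tri_int (- j)) = (-1) ^ nat \<bar>j\<bar>"
proof -
  have "int (tri_int j + tri_int (- j)) = int (nat \<bar>j\<bar> * nat \<bar>j\<bar>)"
    using tri_int_add_tri_int_uminus[of j] by simp
  then have "tri_int j + tri_int (- j) = nat \<bar>j\<bar> * nat \<bar>j\<bar>"
    by (simp only: of_nat_eq_iff)
  then show ?thesis
    by (simp add: minus_one_power_iff)
qed

lemma jtp_term_neg_X_powers:
  "jtp_term (- (fps_X ^ a)) (- (fps_X ^ b)) j
    = fps_const ((-1) ^ nat \<bar>j\<bar>) * (fps_X ^ (a * tri_int j + b * tri_int (- j)) :: int fps)"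
proof -
  have "jtp_term (- (fps_X ^ a)) (- (fps_X ^ b)) j
      = (-1) ^ (tri_int j + tri_int (- j)) * (fps_X ^ (a * tri_int j + b * tri_int (- j)) :: int fps)"
    unfolding jtp_term_def power_minus[of "fps_X ^ a"] power_minus[of "fps_X ^ b"]
    by (simp add: power_add power_mult ac_simps)
  then show ?thesis
    unfolding neg_one_power_tri_int_add_tri_int_uminus by (simp flip: fps_const_power fps_const_neg)
qed

definition euler_fps :: "nat \<Rightarrow> nat \<Rightarrow> int fps" where
  "euler_fps d m = (\<Prod>k<m. 1 - fps_X ^ (d * Suc k))"

definition odd_fps :: "nat \<Rightarrow> int fps" where
  "odd_fps m = (\<Prod>k<m. 1 - fps_X ^ (2 * k + 1))"

definition dist_parts_fps :: "nat \<Rightarrow> int fps" where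
  "dist_parts_fps m = (\<Prod>k<m. 1 + fps_X ^ (2 * Suc k))"

lemma pentagonal_product:
  "qpoch (- (fps_X ^ 2) * - fps_X) n * jtp_prod (- (fps_X ^ 2)) (- fps_X) n = euler_fps 1 (3 * n)"
  unfolding qpoch_mult_jtp_prod_neg_X_powers[of 2 1, unfolded power_one_right]
proof (induction n)
  case (Suc n)
  have exponents: "(2 + 1) * Suc n = Suc (Suc (Suc (3 * n)))" "2 * Suc n + 1 * n = Suc (Suc (3 * n))"
    "2 * n + 1 * Suc n = Suc (3 * n)" "3 * Suc n = Suc (Suc (Suc (3 * n)))"
    by simp_all
  show ?case
    unfolding prod.lessThan_Suc Suc.IH exponents unfolding euler_fps_def prod.lessThan_Suc
    by (simp add: ac_simps)
qed (simp add: euler_fps_def)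

lemma theta_product:
  "qpoch (- (fps_X ^ 3) * - fps_X) n * jtp_prod (- (fps_X ^ 3)) (- fps_X) n
    = euler_fps 4 n * odd_fps (2 * n)"
  unfolding qpoch_mult_jtp_prod_neg_X_powers[of 3 1, unfolded power_one_right]
proof (induction n)
  case (Suc n)
  have exponents: "(3 + 1) * Suc n = 4 * Suc n" "3 * Suc n + 1 * n = 2 * Suc (2 * n) + 1"
    "3 * n + 1 * Suc n = 2 * (2 * n) + 1" "2 * Suc n = Suc (Suc (2 * n))"
    by simp_all
  show ?case
    unfolding prod.lessThan_Suc Suc.IH exponents unfolding euler_fps_def odd_fps_def prod.lessThan_Suc
    by (simp add: ac_simps)
qed (simp add: euler_fps_def odd_fps_def)

lemma dist_parts_fps_mult_euler_fps:
  "dist_parts_fps m * euler_fps 1 (2 * m) = euler_fps 4 m * odd_fps m"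
proof (induction m)
  case (Suc m)
  have "fps_X ^ (2 * Suc m) * fps_X ^ (2 * Suc m) = (fps_X ^ (4 * Suc m) :: int fps)"
    by (simp only: power_add[symmetric]) (rule arg_cong[where f = "\<lambda>i. fps_X ^ i"], simp)
  then have "(1 + fps_X ^ (2 * Suc m)) * (1 - fps_X ^ (2 * Suc m)) = (1 - fps_X ^ (4 * Suc m) :: int fps)"
    by (simp add: algebra_simps)
  moreover have "2 * Suc m = Suc (Suc (2 * m))"
    by simp
  ultimately show ?case
    using Suc unfolding dist_parts_fps_def euler_fps_def odd_fps_def
    by (simp add: ac_simps)
qed (simp add: dist_parts_fps_def euler_fps_def odd_fps_def)

lemma euler_fps_congruent:
  assumes "d \<ge> 1" "m \<le> m'"
  shows "fps_X ^ Suc m dvd euler_fps d m' - euler_fps d m"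
proof -
  define P where "P = (\<Prod>k\<in>{m..<m'}. 1 - fps_X ^ (d * Suc k) :: int fps)"
  have "euler_fps d m' = euler_fps d m * P"
    unfolding euler_fps_def P_def lessThan_atLeast0
    by (rule prod.atLeastLessThan_concat[symmetric]) (use assms(2) in simp_all)
  then have "euler_fps d m' - euler_fps d m = (P - 1) * euler_fps d m"
    by (simp add: algebra_simps)
  moreover have "Suc m \<le> d * Suc k" if "m \<le> k" for k
    using that assms(1) mult_le_mono1[of 1 d "Suc k"] by simp
  then have "fps_X ^ Suc m dvd P - 1"
    unfolding P_def by (intro dvd_prod_one_minus_sub_one le_imp_power_dvd) auto
  ultimately show ?thesis
    by simp
qed

definition pent_sum :: "nat \<Rightarrow> int fps" where
  "pent_sum n = (\<Sum>j\<in>{-int n..int n}. jtp_term (- (fps_X ^ 2)) (- fps_X) j)"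

definition theta_sum :: "nat \<Rightarrow> int fps" where
  "theta_sum n = (\<Sum>j\<in>{-int n..int n}. jtp_term (- (fps_X ^ 3)) (- fps_X) j)"

lemma dist_parts_fps_mult_pent_sum_congruent:
  "fps_X ^ Suc n dvd dist_parts_fps (2 * n) * pent_sum n - theta_sum n"
proof -
  have pent: "fps_X ^ Suc n dvd euler_fps 1 (3 * n) - pent_sum n"
    using jacobi_triple_product_congruent[of "fps_X :: int fps" "- (fps_X ^ 2)" "- fps_X" n]
    unfolding pentagonal_product pent_sum_def by simp
  have euler1: "fps_X ^ Suc n dvd euler_fps 1 (2 * (2 * n)) - euler_fps 1 (3 * n)"
    using euler_fps_congruent[of 1 "3 * n" "2 * (2 * n)"] le_imp_power_dvd[of "Suc n" "Suc (3 * n)"]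
    by (auto intro: dvd_trans)
  have euler4: "fps_X ^ Suc n dvd euler_fps 4 (2 * n) - euler_fps 4 n"
    by (rule euler_fps_congruent) simp_all
  have theta: "fps_X ^ Suc n dvd euler_fps 4 n * odd_fps (2 * n) - theta_sum n"
    using jacobi_triple_product_congruent[of "fps_X :: int fps" "- (fps_X ^ 3)" "- fps_X" n]
    unfolding theta_product theta_sum_def by simp
  have decomposition: "dist_parts_fps (2 * n) * pent_sum n - theta_sum n
      = (euler_fps 4 (2 * n) - euler_fps 4 n) * odd_fps (2 * n)
        + (euler_fps 4 n * odd_fps (2 * n) - theta_sum n)
        - dist_parts_fps (2 * n) * (euler_fps 1 (2 * (2 * n)) - euler_fps 1 (3 * n))
        - dist_parts_fps (2 * n) * (euler_fps 1 (3 * n) - pent_sum n)"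
    unfolding left_diff_distrib right_diff_distrib dist_parts_fps_mult_euler_fps[symmetric]
    by (simp add: algebra_simps)
  show ?thesis
    unfolding decomposition
    by (intro dvd_add dvd_diff dvd_mult2[OF euler4] theta dvd_mult[OF euler1] dvd_mult[OF pent])
qed

section \<open>Comparing coefficients\<close>

lemma fps_nth_eq_0_if_X_power_dvd:
  assumes "fps_X ^ m dvd f" "i < m"
  shows "fps_nth f i = 0"
  using assms by (auto simp: fps_X_power_mult_nth)

lemma sum_int_symmetric_interval:
  "(\<Sum>j\<in>{-int N..int N}. f j) = f 0 + (\<Sum>k\<in>{1..N}. f (- int k) + f (int k))"
proof (induction N)
  case (Suc N)
  have "{-int (Suc N)..int (Suc N)} = insert (int (Suc N)) (insert (- int (Suc N)) {-int N..int N})"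
    by auto
  then show ?case
    using Suc by (simp add: algebra_simps)
qed simp

lemma card_subsets_sum_insert:
  fixes g :: "'a \<Rightarrow> nat"
  assumes "finite S" "k \<notin> S"
  shows "card {A. A \<subseteq> insert k S \<and> sum g A = i}
    = card {A. A \<subseteq> S \<and> sum g A = i}
      + (if g k \<le> i then card {A. A \<subseteq> S \<and> sum g A = i - g k} else 0)"
proof -
  define L where "L i = {A. A \<subseteq> S \<and> sum g A = i}" for i
  define R where "R = {B. B \<subseteq> S \<and> sum g B + g k = i}"
  have fin: "finite (L i)" for i
    unfolding L_def using assms(1) by (auto intro: finite_subset[of _ "Pow S"])
  have sum_insert: "sum g (insert k B) = sum g B + g k" if "B \<subseteq> S" for B
    using that assms finite_subset[OF that] by (subst sum.insert) auto
  have split: "{A. A \<subseteq> insert k S \<and> sum g A = i} = L i \<union> insert k ` R"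
  proof (intro set_eqI iffI)
    fix A assume A: "A \<in> {A. A \<subseteq> insert k S \<and> sum g A = i}"
    show "A \<in> L i \<union> insert k ` R"
    proof (cases "k \<in> A")
      case True
      have "finite A"
        using A assms(1) by (auto intro: finite_subset)
      then have "A - {k} \<in> R"
        using A True by (auto simp: R_def sum.remove)
      then show ?thesis
        using True by (auto intro: image_eqI[of _ _ "A - {k}"])
    qed (use A in \<open>auto simp: L_def\<close>)
  next
    fix A assume "A \<in> L i \<union> insert k ` R"
    then show "A \<in> {A. A \<subseteq> insert k S \<and> sum g A = i}"
      by (auto simp: L_def R_def sum_insert)
  qed
  have "inj_on (insert k) R"
    using assms(2) unfolding R_def inj_on_def by (metis insert_ident mem_Collect_eq subset_iff)
  moreover have "R = (if g k \<le> i then L (i - g k) else {})"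
    unfolding R_def L_def by auto
  moreover have "L i \<inter> insert k ` R = {}"
    using assms(2) unfolding L_def by auto
  ultimately show ?thesis
    unfolding split using fin by (simp add: card_Un_disjoint card_image L_def)
qed

lemma fps_nth_prod_one_plus_X_power:
  assumes "finite S"
  shows "fps_nth (\<Prod>k\<in>S. 1 + fps_X ^ g k :: int fps) i
    = int (card {A. A \<subseteq> S \<and> sum g A = i})"
  using assms
proof (induction S arbitrary: i rule: finite_induct)
  case empty
  have "{A. A \<subseteq> {} \<and> sum g A = i} = (if i = 0 then {{}} else {})"
    by auto
  then show ?case
    by simp
next
  case (insert k S)
  have "(\<Prod>k\<in>insert k S. 1 + fps_X ^ g k :: int fps)
      = (\<Prod>k\<in>S. 1 + fps_X ^ g k) + fps_X ^ g k * (\<Prod>k\<in>S. 1 + fps_X ^ g k)"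
    using insert.hyps by (simp add: algebra_simps)
  then show ?case
    using insert by (simp add: card_subsets_sum_insert fps_X_power_mult_nth not_less)
qed

lemma fps_nth_dist_parts_fps:
  assumes "i div 2 \<le> m"
  shows "fps_nth (dist_parts_fps m) i = (if even i then int (qd (i div 2)) else 0)"
proof -
  have double_sum: "(\<Sum>k\<in>A. 2 * k) = 2 * \<Sum>A" for A :: "nat set"
    by (simp add: sum_distrib_left)
  have "dist_parts_fps m = (\<Prod>k\<in>{1..m}. 1 + fps_X ^ (2 * k))"
    unfolding dist_parts_fps_def One_nat_def prod.atLeast1_atMost_eq ..
  then have coeff: "fps_nth (dist_parts_fps m) i = int (card {A. A \<subseteq> {1..m} \<and> 2 * \<Sum>A = i})"
    by (simp add: fps_nth_prod_one_plus_X_power double_sum)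
  show ?thesis
  proof (cases "even i")
    case True
    then obtain t where t: "i = 2 * t"
      by blast
    have "{A. A \<subseteq> {1..m} \<and> 2 * \<Sum>A = i} = {A. A \<subseteq> {1..t} \<and> \<Sum>A = t}"
    proof (intro set_eqI iffI)
      fix A assume A: "A \<in> {A. A \<subseteq> {1..m} \<and> 2 * \<Sum>A = i}"
      then have "finite A"
        by (auto intro: finite_subset)
      then have "x \<le> t" if "x \<in> A" for x
        using member_le_sum[of x A "\<lambda>x. x"] that A t by auto
      then show "A \<in> {A. A \<subseteq> {1..t} \<and> \<Sum>A = t}"
        using A t by auto
    qed (use assms t in auto)
    then show ?thesis
      using coeff True t by (simp add: qd_def)
  qed (use coeff in auto)
qed

lemma q_half_eq_fps_nth_dist_parts_fps:
  assumes "n \<le> m"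
  shows "int (q ((2 * of_nat n - of_nat p) / 2))
    = (if p \<le> 2 * n then fps_nth (dist_parts_fps m) (2 * n - p) else 0)"
proof (cases "p \<le> 2 * n")
  case False
  then have "(2 * of_nat n - of_nat p) / 2 < (0 :: rat)"
    by (simp add: of_nat_less_iff[symmetric, where 'a = rat])
  then show ?thesis
    using False by (simp add: q_def)
next
  case True
  define d where "d = 2 * n - p"
  have arg: "(2 * of_nat n - of_nat p) / 2 = (of_nat d / 2 :: rat)"
    using True unfolding d_def by simp
  have coeff: "fps_nth (dist_parts_fps m) d = (if even d then int (qd (d div 2)) else 0)"
    using assms unfolding d_def by (intro fps_nth_dist_parts_fps) simp
  show ?thesis
  proof (cases "even d")
    case True
    then obtain t where "d = 2 * t"
      by blast
    then have "(of_nat d / 2 :: rat) = of_nat (d div 2)"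
      by simp
    then show ?thesis
      using \<open>p \<le> 2 * n\<close> True coeff by (simp add: arg d_def[symmetric] q_def)
  next
    case False
    have "(of_nat d / 2 :: rat) \<notin> \<int>"
    proof
      assume "(of_nat d / 2 :: rat) \<in> \<int>"
      then obtain z where "(of_nat d / 2 :: rat) = of_int z"
        by (auto elim: Ints_cases)
      then have "(of_int (int d) :: rat) = of_int (2 * z)"
        by (simp add: field_simps)
      then have "int d = 2 * z"
        by (simp only: of_int_eq_iff)
      then show False
        using False by presburger
    qed
    then show ?thesis
      using \<open>p \<le> 2 * n\<close> False coeff by (simp add: arg d_def[symmetric] q_def)
  qed
qed

lemma q_half_diff_eq_0:
  assumes "2 * n < p"
  shows "q ((2 * of_nat n - of_nat p) / 2) = 0"
  using q_half_eq_fps_nth_dist_parts_fps[of n n p] assms by simp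

lemma P5_eq: "P5 k = of_nat (2 * tri_int (- int k) + tri_int (int k))"
  and Q5_eq: "Q5 k = of_nat (2 * tri_int (int k) + tri_int (- int k))"
proof -
  have "2 * of_nat (tri_int j) = (of_int j * (of_int j + 1) :: rat)" for j
    using arg_cong[OF double_tri_int[of j], of "of_int :: int \<Rightarrow> rat"] by simp
  from this[of "int k"] this[of "- int k"] show "P5 k = of_nat (2 * tri_int (- int k) + tri_int (int k))"
    "Q5 k = of_nat (2 * tri_int (int k) + tri_int (- int k))"
    unfolding P5_def Q5_def by (simp_all add: field_simps)
qed

lemma q_half_diff_P5_Q5_eq_0:
  assumes "2 * n < k"
  shows "q ((2 * of_nat n - P5 k) / 2) = 0" "q ((2 * of_nat n - Q5 k) / 2) = 0"
proof -
  have "k \<le> tri_int (int k)"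
    using le_tri[of k] by (simp only: tri_int_of_nat)
  then show "q ((2 * of_nat n - P5 k) / 2) = 0" "q ((2 * of_nat n - Q5 k) / 2) = 0"
    unfolding P5_eq Q5_eq using assms by (intro q_half_diff_eq_0; linarith)+
qed

lemma fps_nth_dist_parts_fps_mult_pent_sum:
  assumes "n \<le> m"
  shows "fps_nth (dist_parts_fps m * pent_sum N) (2 * n)
    = (\<Sum>j\<in>{-int N..int N}. (-1) ^ nat \<bar>j\<bar>
         * int (q ((2 * of_nat n - of_nat (2 * tri_int j + tri_int (- j))) / 2)))"
  unfolding pent_sum_def sum_distrib_left fps_sum_nth
proof (intro sum.cong refl)
  fix j
  show "fps_nth (dist_parts_fps m * jtp_term (- (fps_X ^ 2)) (- fps_X) j) (2 * n)
      = (-1) ^ nat \<bar>j\<bar> * int (q ((2 * of_nat n - of_nat (2 * tri_int j + tri_int (- j))) / 2))"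
    using jtp_term_neg_X_powers[of 2 1 j]
      q_half_eq_fps_nth_dist_parts_fps[OF assms, of "2 * tri_int j + tri_int (- j)"]
    by (simp add: mult.left_commute[of "dist_parts_fps m"] fps_X_power_mult_right_nth not_less)
qed

lemma Lterm_eq_if_tri:
  assumes "tri m = 2 * n" "1 \<le> m"
  shows "Lterm n = (-1) ^ ((m + 1) div 2)"
proof -
  have "(\<exists>k. m = 4 * k + 1 \<or> m = 4 * k + 2) \<longleftrightarrow> odd ((m + 1) div 2)"
    by presburger
  moreover have "(\<exists>k. m = 4 * k + 3 \<or> m = 4 * k + 4) \<longleftrightarrow> even ((m + 1) div 2)"
    using assms(2) by presburger
  ultimately show ?thesis
    unfolding Lterm_def assms(1)[symmetric] strict_mono_eq[OF strict_mono_tri]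
    by (auto simp: minus_one_power_iff)
qed

lemma Lterm_eq_0_if_not_tri:
  assumes "\<And>m. tri m \<noteq> 2 * n"
  shows "Lterm n = 0"
  using assms unfolding Lterm_def by metis

lemma theta_sum_eq_sum_tri:
  "theta_sum N = (\<Sum>m\<le>2 * N. fps_const ((-1) ^ ((m + 1) div 2)) * fps_X ^ tri m)"
proof -
  (* idx maps j >= 0 to 2j and j < 0 to -2j-1, a bijection onto the naturals
     with 2j^2 + j = Delta_(idx j). *)
  define idx :: "int \<Rightarrow> nat"
    where "idx j = (if 0 \<le> j then 2 * nat j else 2 * nat (- j) - 1)" for j
  define inv :: "nat \<Rightarrow> int"
    where "inv m = (if even m then int (m div 2) else - int ((m + 1) div 2))" for m
  have sign: "(idx j + 1) div 2 = nat \<bar>j\<bar>" for j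
    unfolding idx_def by (cases "0 \<le> j") (auto simp: abs_if)
  have "2 * int (tri (idx j)) = 2 * int (3 * tri_int j + tri_int (- j))" for j
  proof -
    have "2 * int (tri (idx j)) = int (idx j) * (int (idx j) + 1)"
      using double_tri_int[of "int (idx j)"] by simp
    also have "\<dots> = 3 * (j * (j + 1)) + (- j) * (- j + 1)"
      unfolding idx_def by (cases "0 \<le> j") (simp_all add: algebra_simps)
    also have "\<dots> = 3 * (2 * int (tri_int j)) + 2 * int (tri_int (- j))"
      by (simp only: double_tri_int)
    finally show ?thesis
      by simp
  qed
  then have exponent: "tri (idx j) = 3 * tri_int j + tri_int (- j)" for j
    by (simp only: mult_left_cancel[of 2] of_nat_eq_iff)
  show ?thesis
    unfolding theta_sum_def jtp_term_neg_X_powers[of 3 1, unfolded power_one_right mult_1]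
  proof (rule sum.reindex_bij_witness[of _ inv idx])
    show "inv (idx j) = j" if "j \<in> {-int N..int N}" for j
    proof (cases "0 \<le> j")
      case False
      then have "idx j = 2 * (nat (- j) - 1) + 1"
        unfolding idx_def by simp
      then show ?thesis
        using False unfolding inv_def by simp
    qed (simp add: idx_def inv_def)
    show "idx (inv m) = m" if "m \<in> {..2 * N}" for m
      unfolding inv_def idx_def by (cases "even m") (auto elim!: oddE)
    show "idx j \<in> {..2 * N}" if "j \<in> {-int N..int N}" for j
      using that unfolding idx_def by auto
    show "inv m \<in> {-int N..int N}" if "m \<in> {..2 * N}" for m
      using that unfolding inv_def by (cases "even m") (auto elim!: oddE)
  qed (simp only: sign exponent)
qed

lemma fps_nth_theta_sum:
  assumes "1 \<le> n" "n \<le> N"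
  shows "fps_nth (theta_sum N) (2 * n) = Lterm n"
proof -
  have coeff: "fps_nth (theta_sum N) (2 * n)
      = (\<Sum>m\<le>2 * N. if m \<in> {m. tri m = 2 * n} then (-1) ^ ((m + 1) div 2) else 0)"
    unfolding theta_sum_eq_sum_tri fps_sum_nth by (intro sum.cong refl) auto
  show ?thesis
  proof (cases "\<exists>m. tri m = 2 * n")
    case True
    then obtain m where m: "tri m = 2 * n"
      by blast
    then have "{m. tri m = 2 * n} = {m}"
      by (simp add: m[symmetric] strict_mono_eq[OF strict_mono_tri])
    moreover have "m \<le> 2 * N"
      using le_tri[of m] m assms(2) by simp
    moreover have "1 \<le> m"
      using m assms(1) by (cases m) (auto simp: tri_def)
    ultimately show ?thesis
      unfolding coeff using m by (simp add: Lterm_eq_if_tri)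
  next
    case False
    then show ?thesis
      unfolding coeff by (simp add: Lterm_eq_0_if_not_tri)
  qed
qed

lemma qd_add_alternating_sum_eq_Lterm:
  assumes "1 \<le> n" "2 * n \<le> N"
  shows "int (qd n) + (\<Sum>k=1..N. (-1) ^ k
           * (int (q ((2 * of_nat n - P5 k) / 2)) + int (q ((2 * of_nat n - Q5 k) / 2))))
         = Lterm n"
proof -
  have "fps_nth (dist_parts_fps (2 * N) * pent_sum N - theta_sum N) (2 * n) = 0"
    using assms(2) by (intro fps_nth_eq_0_if_X_power_dvd[OF dist_parts_fps_mult_pent_sum_congruent]) simp
  then have "Lterm n = fps_nth (dist_parts_fps (2 * N) * pent_sum N) (2 * n)"
    using fps_nth_theta_sum[of n N] assms by simp
  also have "\<dots> = (\<Sum>j\<in>{-int N..int N}. (-1) ^ nat \<bar>j\<bar>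
         * int (q ((2 * of_nat n - of_nat (2 * tri_int j + tri_int (- j))) / 2)))"
    using assms(2) by (intro fps_nth_dist_parts_fps_mult_pent_sum) simp
  also have "\<dots> = int (qd n) + (\<Sum>k=1..N. (-1) ^ k
           * (int (q ((2 * of_nat n - P5 k) / 2)) + int (q ((2 * of_nat n - Q5 k) / 2))))"
  proof -
    have "tri_int 0 = 0"
      by (simp add: tri_int_def)
    moreover have "q (of_nat n) = qd n"
      by (simp add: q_def)
    ultimately show ?thesis
      unfolding sum_int_symmetric_interval P5_eq Q5_eq by (simp add: distrib_left)
  qed
  finally show ?thesis ..
qed

theorem theorem2p5:
  fixes n :: nat
  assumes "n \<ge> 1"
  shows "(\<lambda>k. (-1::real) ^ (k + 2) *
            (real (q ((2 * of_nat n - P5 (Suc k)) / 2)) + real (q ((2 * of_nat n - Q5 (Suc k)) / 2))))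
         sums (real (qd n) - real_of_int (Lterm n))"
proof -
  define a where "a k = (-1) ^ k
    * (int (q ((2 * of_nat n - P5 k) / 2)) + int (q ((2 * of_nat n - Q5 k) / 2)))" for k
  have "a (Suc k) = 0" if "2 * n \<le> k" for k
    using that by (simp add: a_def q_half_diff_P5_Q5_eq_0)
  then have "(\<lambda>k. - real_of_int (a (Suc k))) sums (\<Sum>k<2 * n. - real_of_int (a (Suc k)))"
    by (intro sums_finite) auto
  also have "(\<Sum>k<2 * n. - real_of_int (a (Suc k))) = - real_of_int (\<Sum>k=1..2 * n. a k)"
    by (simp only: One_nat_def sum.atLeast1_atMost_eq of_int_sum sum_negf)
  also have "\<dots> = real (qd n) - real_of_int (Lterm n)"
  proof -
    have "(\<Sum>k=1..2 * n. a k) = Lterm n - int (qd n)"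
      using qd_add_alternating_sum_eq_Lterm[OF assms order_refl, folded a_def] by simp
    then show ?thesis
      by (simp only: of_int_diff of_int_of_nat_eq minus_diff_eq)
  qed
  finally show ?thesis
    by (simp add: a_def)
qed

end
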